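(* Let $L$ be a $\kappa$-frame. The map $\nabla_\bullet\colon \mathfrak{H}_\kappa L \to \mathbb{C} L$, $I \mapsto \nabla_I$, is an injective frame homomorphism.
   Context: $\kappa$ is a fixed regular cardinal; a $\kappa$-set is a set of cardinality $<\kappa$. A $\kappa$-frame is a bounded distributive lattice having joins of all $\kappa$-subsets and satisfying $x\wedge\bigvee S=\bigvee_{s\in S}(x\wedge s)$ for $\kappa$-subsets $S$. A $\kappa$-ideal of $L$ is a downset $I\subseteq L$ such that every $\kappa$-subset of $I$ has an upper bound in $I$; $\mathfrak{H}_\kappa L$ is the frame of $\kappa$-ideals of $L$ ordered by inclusion. A congruence on $L$ is an equivalence relation on $L$ which is also a sub-$\kappa$-frame of $L\times L$; $\mathbb{C}L$ denotes the frame of congruences ordered by inclusion. For $a\in L$, $\nabla_a=\{(x,y)\mid x\vee a=y\vee a\}$ (the congruence generated by $(0,a)$), and for a $\kappa$-ideal $I$, $\nabla_I=\bigvee_{a\in I}\nabla_a$ in $\mathbb{C}L$. *)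

theory Defs
  imports Main
begin

text \<open>kappa is represented by a cardinal order relation k (on some type 'b).
  A kappa-set is a set S with card_of S strictly below k.\<close>

definition kset :: "'b rel \<Rightarrow> 'a set \<Rightarrow> bool" where
  "kset k S \<longleftrightarrow> (card_of S, k) \<in> ordLess"

definition regular_cardinal :: "'b rel \<Rightarrow> bool" where
  "regular_cardinal k \<longleftrightarrow> Cinfinite k \<and> regularCard k"

definition is_lub :: "'a::order set \<Rightarrow> 'a \<Rightarrow> bool" where
  "is_lub S x \<longleftrightarrow> (\<forall>s\<in>S. s \<le> x) \<and> (\<forall>y. (\<forall>s\<in>S. s \<le> y) \<longrightarrow> x \<le> y)"

definition kappa_frame :: "'b rel \<Rightarrow> 'a::{bounded_lattice,distrib_lattice} itself \<Rightarrow> bool" where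
  "kappa_frame k _ \<longleftrightarrow>
     (\<forall>S::'a set. kset k S \<longrightarrow> (\<exists>s. is_lub S s)) \<and>
     (\<forall>(S::'a set) x s. kset k S \<longrightarrow> is_lub S s \<longrightarrow> is_lub ((\<lambda>t. inf x t) ` S) (inf x s))"

definition kideals :: "'b rel \<Rightarrow> ('a::order) set set" where
  "kideals k = {I. (\<forall>x y. y \<in> I \<longrightarrow> x \<le> y \<longrightarrow> x \<in> I) \<and>
                   (\<forall>S. S \<subseteq> I \<longrightarrow> kset k S \<longrightarrow> (\<exists>u\<in>I. \<forall>s\<in>S. s \<le> u))}"

text \<open>Congruences: equivalence relations that are sub-kappa-frames of L x L
  (contain top and bottom, closed under binary meets and under kappa-joins,
  joins in L x L being computed componentwise).\<close>
definition congs :: "'b rel \<Rightarrow> ('a::bounded_lattice \<times> 'a) set set" where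
  "congs k = {C. equiv UNIV C \<and> (bot, bot) \<in> C \<and> (top, top) \<in> C \<and>
                 (\<forall>p\<in>C. \<forall>q\<in>C. (inf (fst p) (fst q), inf (snd p) (snd q)) \<in> C) \<and>
                 (\<forall>S x y. S \<subseteq> C \<longrightarrow> kset k S \<longrightarrow> is_lub (fst ` S) x \<longrightarrow> is_lub (snd ` S) y
                      \<longrightarrow> (x, y) \<in> C)}"

definition is_lub_in :: "'c set set \<Rightarrow> 'c set set \<Rightarrow> 'c set \<Rightarrow> bool" where
  "is_lub_in F S X \<longleftrightarrow> X \<in> F \<and> (\<forall>Y\<in>S. Y \<subseteq> X) \<and> (\<forall>Z\<in>F. (\<forall>Y\<in>S. Y \<subseteq> Z) \<longrightarrow> X \<subseteq> Z)"

definition is_glb_in :: "'c set set \<Rightarrow> 'c set set \<Rightarrow> 'c set \<Rightarrow> bool" where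
  "is_glb_in F S X \<longleftrightarrow> X \<in> F \<and> (\<forall>Y\<in>S. X \<subseteq> Y) \<and> (\<forall>Z\<in>F. (\<forall>Y\<in>S. Z \<subseteq> Y) \<longrightarrow> Z \<subseteq> X)"

definition lub_in :: "'c set set \<Rightarrow> 'c set set \<Rightarrow> 'c set" where
  "lub_in F S = (THE X. is_lub_in F S X)"

definition frame_hom :: "'c set set \<Rightarrow> 'd set set \<Rightarrow> ('c set \<Rightarrow> 'd set) \<Rightarrow> bool" where
  "frame_hom F G h \<longleftrightarrow>
     (\<forall>X\<in>F. h X \<in> G) \<and>
     (\<forall>S J. S \<subseteq> F \<longrightarrow> is_lub_in F S J \<longrightarrow> is_lub_in G (h ` S) (h J)) \<and>
     (\<forall>X\<in>F. \<forall>Y\<in>F. \<forall>M. is_glb_in F {X, Y} M \<longrightarrow> is_glb_in G {h X, h Y} (h M)) \<and>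
     (\<forall>T. is_glb_in F {} T \<longrightarrow> is_glb_in G {} (h T))"

definition nabla :: "'a::lattice \<Rightarrow> ('a \<times> 'a) set" where
  "nabla a = {(x, y). sup x a = sup y a}"

definition nablaI :: "'b rel \<Rightarrow> 'a::bounded_lattice set \<Rightarrow> ('a \<times> 'a) set" where
  "nablaI k I = lub_in (congs k) (nabla ` I)"

end

theory Submission
  imports Defs
begin

text \<open>For a \<kappa>-ideal \<open>I\<close> the plain union of the congruences \<open>\<nabla>\<^sub>a\<close>, \<open>a \<in> I\<close>, is already
  a congruence, because two witnesses \<open>a, b \<in> I\<close> of \<open>x \<vee> a = y \<vee> a\<close> can always be
  replaced by a common upper bound in \<open>I\<close>; hence \<open>\<nabla>\<^sub>I = {(x, y) | \<exists>a\<in>I. x \<vee> a = y \<vee> a}\<close>.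
  Conversely every congruence \<open>\<theta>\<close> yields the \<kappa>-ideal \<open>{a | (0, a) \<in> \<theta>}\<close>, and
  \<open>\<nabla>\<^sub>I \<subseteq> \<theta>\<close> iff \<open>I\<close> is contained in it. This Galois connection gives preservation of
  joins; meets are preserved since \<open>x \<vee> (a \<wedge> b) = (x \<vee> a) \<wedge> (x \<vee> b)\<close>, and
  \<open>(0, a) \<in> \<nabla>\<^sub>I \<longleftrightarrow> a \<in> I\<close> gives injectivity.\<close>

lemma kset_finite:
  assumes "Cinfinite k" "finite S"
  shows "kset k S"
proof -
  have "Cfinite (card_of S)" using assms(2) by (simp add: cfinite_def Field_card_of card_of_card_order_on)
  then show ?thesis unfolding kset_def using Cfinite_ordLess_Cinfinite assms(1) by blast
qed

lemma kset_image: "kset k S \<Longrightarrow> kset k (f ` S)"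
  unfolding kset_def using card_of_image ordLeq_ordLess_trans by blast

lemma lub_in_eq: "is_lub_in F S X \<Longrightarrow> lub_in F S = X"
  unfolding lub_in_def by (rule the_equality) (auto simp: is_lub_in_def)

lemma sup_eq_mono:
  fixes x y a b :: "'a::lattice"
  assumes "sup x a = sup y a" "a \<le> b"
  shows "sup x b = sup y b"
  by (metis assms sup.absorb_iff2 sup.assoc)

lemma kideal_down: "I \<in> kideals k \<Longrightarrow> y \<in> I \<Longrightarrow> x \<le> y \<Longrightarrow> x \<in> I"
  unfolding kideals_def by blast

lemma kideal_upper_bound: "I \<in> kideals k \<Longrightarrow> S \<subseteq> I \<Longrightarrow> kset k S \<Longrightarrow> \<exists>u\<in>I. \<forall>s\<in>S. s \<le> u"
  unfolding kideals_def by blast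

lemma kideal_bot:
  fixes I :: "'a::order_bot set"
  assumes "I \<in> kideals k" "Cinfinite k"
  shows "bot \<in> I"
proof -
  obtain u where "u \<in> I"
    using kideal_upper_bound[OF assms(1), of "{}"] kset_finite[OF assms(2), of "{}"] by auto
  then show ?thesis by (rule kideal_down[OF assms(1)]) simp
qed

lemma kideal_sup:
  fixes a b :: "'a::lattice"
  assumes "I \<in> kideals k" "Cinfinite k" "a \<in> I" "b \<in> I"
  shows "sup a b \<in> I"
proof -
  obtain u where "u \<in> I" "a \<le> u" "b \<le> u"
    using kideal_upper_bound[OF assms(1), of "{a, b}"] kset_finite[OF assms(2), of "{a, b}"] assms(3,4) by auto
  then show ?thesis using kideal_down[OF assms(1) \<open>u \<in> I\<close>, of "sup a b"] by simp
qed

lemma Int_kideals: "I \<in> kideals k \<Longrightarrow> J \<in> kideals k \<Longrightarrow> I \<inter> J \<in> (kideals k :: 'a::lattice set set)"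
proof -
  assume I: "I \<in> kideals k" and J: "J \<in> kideals k"
  have "x \<in> I \<inter> J" if "y \<in> I \<inter> J" "x \<le> y" for x y
    using that kideal_down[OF I] kideal_down[OF J] by blast
  moreover have "\<exists>w\<in>I \<inter> J. \<forall>s\<in>S. s \<le> w" if S: "S \<subseteq> I \<inter> J" "kset k S" for S
  proof -
    have "S \<subseteq> I" "S \<subseteq> J" using S(1) by auto
    then obtain u v where uv: "u \<in> I" "v \<in> J" "\<forall>s\<in>S. s \<le> u" "\<forall>s\<in>S. s \<le> v"
      using kideal_upper_bound[OF I _ S(2)] kideal_upper_bound[OF J _ S(2)] by blast
    have "inf u v \<in> I \<inter> J"
      using kideal_down[OF I uv(1), of "inf u v"] kideal_down[OF J uv(2), of "inf u v"] by simp
    then show ?thesis using uv(3,4) by (intro bexI[of _ "inf u v"]) simp_all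
  qed
  ultimately show ?thesis unfolding kideals_def mem_Collect_eq by blast
qed

lemma UNIV_kideals: "UNIV \<in> (kideals k :: 'a::order_top set set)"
  unfolding kideals_def by (auto intro: exI[of _ top])

lemma congs_equiv: "\<theta> \<in> congs k \<Longrightarrow> equiv UNIV \<theta>"
  unfolding congs_def by simp

lemma congs_refl: "\<theta> \<in> congs k \<Longrightarrow> (x, x) \<in> \<theta>"
  using congs_equiv unfolding equiv_def refl_on_def by blast

lemma congs_inf:
  assumes "\<theta> \<in> congs k" "(a, b) \<in> \<theta>" "(c, d) \<in> \<theta>"
  shows "(inf a c, inf b d) \<in> \<theta>"
proof -
  have "\<forall>p\<in>\<theta>. \<forall>q\<in>\<theta>. (inf (fst p) (fst q), inf (snd p) (snd q)) \<in> \<theta>"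
    using assms(1) unfolding congs_def by simp
  then show ?thesis using assms(2,3) by fastforce
qed

lemma congs_lub:
  "\<theta> \<in> congs k \<Longrightarrow> S \<subseteq> \<theta> \<Longrightarrow> kset k S \<Longrightarrow> is_lub (fst ` S) x \<Longrightarrow> is_lub (snd ` S) y
    \<Longrightarrow> (x, y) \<in> \<theta>"
  unfolding congs_def mem_Collect_eq by (elim conjE allE impE)

lemma congs_sup:
  assumes "\<theta> \<in> congs k" "Cinfinite k" "(a, b) \<in> \<theta>" "(c, d) \<in> \<theta>"
  shows "(sup a c, sup b d) \<in> \<theta>"
proof (rule congs_lub[OF assms(1), of "{(a, b), (c, d)}"])
  show "kset k {(a, b), (c, d)}" using kset_finite[OF assms(2), of "{(a, b), (c, d)}"] by simp
qed (use assms(3,4) in \<open>auto simp: is_lub_def\<close>)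

lemma nabla_subset_congs:
  assumes \<theta>: "\<theta> \<in> congs k" "Cinfinite k" and a: "(bot, a) \<in> \<theta>"
  shows "nabla a \<subseteq> \<theta>"
proof
  fix p assume "p \<in> nabla a"
  then obtain x y where p: "p = (x, y)" "sup x a = sup y a" unfolding nabla_def by auto
  have "(x, sup x a) \<in> \<theta>" "(y, sup y a) \<in> \<theta>"
    using congs_sup[OF \<theta> congs_refl[OF \<theta>(1)] a] by (metis sup_bot_right)+
  then show "p \<in> \<theta>" using congs_equiv[OF \<theta>(1)] p unfolding equiv_def by (metis symD transD)
qed

text \<open>Existence of \<kappa>-joins in \<open>L\<close> is what makes this a \<kappa>-ideal.\<close>

lemma congs_zero_class_kideal:
  fixes \<theta> :: "('a::{bounded_lattice,distrib_lattice} \<times> 'a) set"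
  assumes \<theta>: "\<theta> \<in> congs k" and F: "kappa_frame k TYPE('a)"
  shows "{a. (bot, a) \<in> \<theta>} \<in> kideals k"
  unfolding kideals_def
proof safe
  fix x y assume y: "(bot, y) \<in> \<theta>" and "x \<le> y"
  have "(inf bot x, inf y x) \<in> \<theta>" using congs_inf[OF \<theta> y congs_refl[OF \<theta>]] .
  then show "(bot, x) \<in> \<theta>" using \<open>x \<le> y\<close> by (simp add: inf_absorb2)
next
  fix S assume S: "S \<subseteq> {a. (bot, a) \<in> \<theta>}" "kset k S"
  obtain s where s: "is_lub S s" using F S(2) unfolding kappa_frame_def by blast
  have "(bot, s) \<in> \<theta>"
  proof (rule congs_lub[OF \<theta>, of "Pair bot ` S"])
    show "is_lub (snd ` Pair bot ` S) s" using s by (simp add: image_image)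
  qed (use S kset_image[OF S(2)] in \<open>auto simp: is_lub_def\<close>)
  then show "\<exists>u\<in>{a. (bot, a) \<in> \<theta>}. \<forall>s\<in>S. s \<le> u" using s unfolding is_lub_def by auto
qed

definition nabla_union :: "'a::lattice set \<Rightarrow> ('a \<times> 'a) set" where
  "nabla_union I = (\<Union>a\<in>I. nabla a)"

lemma mem_nabla_union_iff: "(x, y) \<in> nabla_union I \<longleftrightarrow> (\<exists>a\<in>I. sup x a = sup y a)"
  unfolding nabla_union_def nabla_def by blast

lemma nabla_union_mono: "I \<subseteq> J \<Longrightarrow> nabla_union I \<subseteq> nabla_union J"
  unfolding nabla_union_def by blast

lemma nabla_union_UNIV: "nabla_union (UNIV :: 'a::bounded_lattice set) = UNIV"
proof -
  have "(x, y) \<in> nabla_union UNIV" for x y :: 'a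
    unfolding mem_nabla_union_iff by (intro bexI[of _ top]) simp_all
  then show ?thesis by auto
qed

lemma zero_mem_nabla_union: "a \<in> I \<Longrightarrow> (bot :: 'a::bounded_lattice, a) \<in> nabla_union I"
  unfolding mem_nabla_union_iff by (intro bexI[of _ a]) simp_all

lemma zero_mem_nabla_union_iff:
  fixes I :: "'a::bounded_lattice set"
  assumes "I \<in> kideals k"
  shows "(bot, a) \<in> nabla_union I \<longleftrightarrow> a \<in> I"
proof
  assume "(bot, a) \<in> nabla_union I"
  then obtain b where b: "b \<in> I" "sup bot b = sup a b" unfolding mem_nabla_union_iff ..
  then have "a \<le> b" by (simp add: le_iff_sup)
  then show "a \<in> I" using kideal_down[OF assms b(1)] by blast
qed (rule zero_mem_nabla_union)

lemma lub_sup_le: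
  fixes x y u :: "'a::lattice"
  assumes "is_lub (fst ` S) x" "is_lub (snd ` S) y" "\<forall>p\<in>S. sup (fst p) u = sup (snd p) u"
  shows "x \<le> sup y u"
proof -
  have "fst p \<le> sup y u" if "p \<in> S" for p
  proof -
    have "fst p \<le> sup (snd p) u" using assms(3) that by (metis sup.cobounded1)
    also have "\<dots> \<le> sup y u" using assms(2) that unfolding is_lub_def by (simp add: le_supI1)
    finally show ?thesis .
  qed
  then show ?thesis using assms(1) unfolding is_lub_def by auto
qed

lemma nabla_union_lub_closed:
  assumes I: "I \<in> kideals k" and S: "S \<subseteq> nabla_union I" "kset k S"
    and x: "is_lub (fst ` S) x" and y: "is_lub (snd ` S) y"
  shows "(x, y) \<in> nabla_union I"
proof -
  have "\<forall>p\<in>S. \<exists>a\<in>I. sup (fst p) a = sup (snd p) a"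
  proof
    fix p assume "p \<in> S"
    then have "(fst p, snd p) \<in> nabla_union I" using S(1) by auto
    then show "\<exists>a\<in>I. sup (fst p) a = sup (snd p) a" unfolding mem_nabla_union_iff .
  qed
  then obtain w where w: "\<forall>p\<in>S. w p \<in> I \<and> sup (fst p) (w p) = sup (snd p) (w p)"
    by (metis bchoice)
  obtain u where u: "u \<in> I" "\<forall>p\<in>S. w p \<le> u"
    using kideal_upper_bound[OF I, of "w ` S"] kset_image[OF S(2)] w by auto
  have eq: "\<forall>p\<in>S. sup (fst p) u = sup (snd p) u"
    using w u sup_eq_mono[of "fst p" "w p" "snd p" u for p] by blast
  have "x \<le> sup y u" using lub_sup_le[OF x y eq] .
  moreover have "y \<le> sup x u"
    using lub_sup_le[of "prod.swap ` S" y x u] x y eq by (simp add: image_image)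
  ultimately have "sup x u = sup y u" by (simp add: antisym)
  then show ?thesis using u(1) by (auto simp: mem_nabla_union_iff)
qed

lemma nabla_union_common_witness:
  assumes I: "I \<in> kideals k" and C: "Cinfinite k"
    and xy: "(x, y) \<in> nabla_union I" "(x', y') \<in> nabla_union I"
  shows "\<exists>c\<in>I. sup x c = sup y c \<and> sup x' c = sup y' c"
proof -
  obtain a b where ab: "a \<in> I" "sup x a = sup y a" "b \<in> I" "sup x' b = sup y' b"
    using xy by (auto simp: mem_nabla_union_iff)
  show ?thesis
  proof (intro bexI conjI)
    show "sup a b \<in> I" using kideal_sup[OF I C ab(1,3)] .
    show "sup x (sup a b) = sup y (sup a b)" using sup_eq_mono[OF ab(2) sup.cobounded1] .
    show "sup x' (sup a b) = sup y' (sup a b)" using sup_eq_mono[OF ab(4) sup.cobounded2] .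
  qed
qed

lemma nabla_union_congs:
  fixes I :: "'a::{bounded_lattice,distrib_lattice} set"
  assumes I: "I \<in> kideals k" and C: "Cinfinite k"
  shows "nabla_union I \<in> congs k"
proof -
  have bot: "bot \<in> I" using kideal_bot[OF I C] .
  have "refl (nabla_union I)" using bot by (auto simp: refl_on_def mem_nabla_union_iff)
  moreover have "sym (nabla_union I)"
    unfolding sym_def mem_nabla_union_iff by (metis (no_types))
  moreover have "trans (nabla_union I)"
  proof (rule transI)
    fix x y z assume "(x, y) \<in> nabla_union I" "(y, z) \<in> nabla_union I"
    then obtain c where "c \<in> I" "sup x c = sup y c" "sup y c = sup z c"
      using nabla_union_common_witness[OF I C] by blast
    then show "(x, z) \<in> nabla_union I" unfolding mem_nabla_union_iff by auto
  qed
  moreover have "(inf x x', inf y y') \<in> nabla_union I"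
    if xy: "(x, y) \<in> nabla_union I" "(x', y') \<in> nabla_union I" for x y x' y'
  proof -
    obtain c where "c \<in> I" "sup x c = sup y c" "sup x' c = sup y' c"
      using nabla_union_common_witness[OF I C xy] by blast
    then have "sup (inf x x') c = sup (inf y y') c" by (simp add: sup_inf_distrib2)
    then show ?thesis using \<open>c \<in> I\<close> unfolding mem_nabla_union_iff by blast
  qed
  ultimately show ?thesis
    using bot nabla_union_lub_closed[OF I]
    unfolding congs_def by (auto simp: equiv_def mem_nabla_union_iff)
qed

lemma nablaI_eq_nabla_union:
  fixes I :: "'a::{bounded_lattice,distrib_lattice} set"
  assumes "I \<in> kideals k" "Cinfinite k"
  shows "nablaI k I = nabla_union I"
  unfolding nablaI_def
  using nabla_union_congs[OF assms] by (intro lub_in_eq) (auto simp: is_lub_in_def nabla_union_def)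

lemma nabla_union_subset_congs_iff:
  fixes I :: "'a::{bounded_lattice,distrib_lattice} set"
  assumes "I \<in> kideals k" "\<theta> \<in> congs k" "Cinfinite k"
  shows "nabla_union I \<subseteq> \<theta> \<longleftrightarrow> I \<subseteq> {a. (bot, a) \<in> \<theta>}"
  using zero_mem_nabla_union_iff[OF assms(1)] nabla_subset_congs[OF assms(2,3)]
  unfolding nabla_union_def by blast

lemma nabla_union_Int:
  fixes I J :: "'a::distrib_lattice set"
  assumes "I \<in> kideals k" "J \<in> kideals k"
  shows "nabla_union (I \<inter> J) = nabla_union I \<inter> nabla_union J"
proof
  show "nabla_union I \<inter> nabla_union J \<subseteq> nabla_union (I \<inter> J)"
  proof clarify
    fix x y assume "(x, y) \<in> nabla_union I" "(x, y) \<in> nabla_union J"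
    then obtain a b where "a \<in> I" "sup x a = sup y a" "b \<in> J" "sup x b = sup y b"
      by (auto simp: mem_nabla_union_iff)
    moreover have "inf a b \<in> I" "inf a b \<in> J"
      using kideal_down[OF assms(1) \<open>a \<in> I\<close>] kideal_down[OF assms(2) \<open>b \<in> J\<close>] by simp_all
    ultimately show "(x, y) \<in> nabla_union (I \<inter> J)"
      by (auto simp: mem_nabla_union_iff sup_inf_distrib1 intro: bexI[of _ "inf a b"])
  qed
qed (simp add: nabla_union_mono)

lemma nabla_union_preserves_lub:
  fixes J :: "'a::{bounded_lattice,distrib_lattice} set"
  assumes C: "Cinfinite k" and F: "kappa_frame k TYPE('a)"
    and J: "is_lub_in (kideals k) S J"
  shows "is_lub_in (congs k) (nabla_union ` S) (nabla_union J)"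
  unfolding is_lub_in_def
proof (intro conjI ballI impI)
  have J_ideal: "J \<in> kideals k" using J unfolding is_lub_in_def by blast
  then show "nabla_union J \<in> congs k" using nabla_union_congs C by blast
  show "Y \<subseteq> nabla_union J" if "Y \<in> nabla_union ` S" for Y
  proof -
    obtain I where "I \<in> S" "Y = nabla_union I" using \<open>Y \<in> nabla_union ` S\<close> by blast
    moreover have "I \<subseteq> J" using J \<open>I \<in> S\<close> unfolding is_lub_in_def by blast
    ultimately show ?thesis by (simp add: nabla_union_mono)
  qed
  fix \<theta> assume \<theta>: "\<theta> \<in> congs k" "\<forall>Y\<in>nabla_union ` S. Y \<subseteq> \<theta>"
  have "\<forall>I\<in>S. I \<subseteq> {a. (bot, a) \<in> \<theta>}"
    using \<theta>(2) zero_mem_nabla_union by blast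
  then have "J \<subseteq> {a. (bot, a) \<in> \<theta>}"
    using J congs_zero_class_kideal[OF \<theta>(1) F] unfolding is_lub_in_def by blast
  then show "nabla_union J \<subseteq> \<theta>" using nabla_union_subset_congs_iff[OF J_ideal \<theta>(1) C] by blast
qed

lemma nabla_union_preserves_inf:
  fixes X Y :: "'a::{bounded_lattice,distrib_lattice} set"
  assumes C: "Cinfinite k" and X: "X \<in> kideals k" and Y: "Y \<in> kideals k"
    and M: "is_glb_in (kideals k) {X, Y} M"
  shows "is_glb_in (congs k) {nabla_union X, nabla_union Y} (nabla_union M)"
proof -
  have "M = X \<inter> Y" using M Int_kideals[OF X Y] unfolding is_glb_in_def by blast
  then have "nabla_union M = nabla_union X \<inter> nabla_union Y" using nabla_union_Int[OF X Y] by simp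
  moreover have "nabla_union M \<in> congs k" using M nabla_union_congs C unfolding is_glb_in_def by blast
  ultimately show ?thesis unfolding is_glb_in_def by auto
qed

lemma nabla_union_preserves_top:
  assumes "is_glb_in (kideals k :: 'a::bounded_lattice set set) {} T"
  shows "is_glb_in (congs k) {} (nabla_union T)"
proof -
  have "T = UNIV" using assms UNIV_kideals unfolding is_glb_in_def by blast
  then have "nabla_union T = UNIV" by (simp add: nabla_union_UNIV)
  moreover have "UNIV \<in> (congs k :: ('a \<times> 'a) set set)"
    unfolding congs_def by (simp add: equiv_def refl_on_def sym_def trans_def)
  ultimately show ?thesis unfolding is_glb_in_def by auto
qed

lemma inj_on_nabla_union: "inj_on nabla_union (kideals k :: 'a::bounded_lattice set set)"
proof (rule inj_onI)
  fix I J :: "'a set"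
  assume I: "I \<in> kideals k" and J: "J \<in> kideals k" and eq: "nabla_union I = nabla_union J"
  show "I = J"
  proof (rule set_eqI)
    fix a show "a \<in> I \<longleftrightarrow> a \<in> J"
      using zero_mem_nabla_union_iff[OF I, of a] zero_mem_nabla_union_iff[OF J, of a] eq by simp
  qed
qed

lemma frame_hom_cong:
  assumes hom: "frame_hom F G h" and eq: "\<And>X. X \<in> F \<Longrightarrow> g X = h X"
  shows "frame_hom F G g"
  unfolding frame_hom_def
proof (intro conjI ballI allI impI)
  fix X assume "X \<in> F"
  then show "g X \<in> G" using hom eq unfolding frame_hom_def by simp
next
  fix S J assume S: "S \<subseteq> F" and J: "is_lub_in F S J"
  have "is_lub_in G (h ` S) (h J)" using hom S J unfolding frame_hom_def by blast
  moreover have "g ` S = h ` S" using S eq by (auto intro: image_cong)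
  moreover have "g J = h J" using J eq unfolding is_lub_in_def by blast
  ultimately show "is_lub_in G (g ` S) (g J)" by simp
next
  fix X Y M assume X: "X \<in> F" and Y: "Y \<in> F" and M: "is_glb_in F {X, Y} M"
  have "is_glb_in G {h X, h Y} (h M)" using hom X Y M unfolding frame_hom_def by blast
  moreover have "g M = h M" using M eq unfolding is_glb_in_def by blast
  ultimately show "is_glb_in G {g X, g Y} (g M)" using X Y eq by simp
next
  fix T assume T: "is_glb_in F {} T"
  have "is_glb_in G {} (h T)" using hom T unfolding frame_hom_def by blast
  moreover have "g T = h T" using T eq unfolding is_glb_in_def by blast
  ultimately show "is_glb_in G {} (g T)" by simp
qed

theorem mainTheorem2:
  fixes k :: "'b rel"
  assumes "regular_cardinal k"
    and "kappa_frame k TYPE('a::{bounded_lattice,distrib_lattice})"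
  shows "frame_hom (kideals k :: 'a set set) (congs k) (nablaI k)
         \<and> inj_on (nablaI k) (kideals k :: 'a set set)"
proof -
  have C: "Cinfinite k" using assms(1) unfolding regular_cardinal_def by blast
  have eq: "\<And>I. I \<in> (kideals k :: 'a set set) \<Longrightarrow> nablaI k I = nabla_union I"
    using nablaI_eq_nabla_union C by blast
  have "frame_hom (kideals k :: 'a set set) (congs k) nabla_union"
    unfolding frame_hom_def
    using nabla_union_congs[OF _ C] nabla_union_preserves_lub[OF C assms(2)]
      nabla_union_preserves_inf[OF C] nabla_union_preserves_top
    by blast
  from frame_hom_cong[OF this eq]
  have "frame_hom (kideals k :: 'a set set) (congs k) (nablaI k)" .
  moreover have "inj_on (nablaI k) (kideals k :: 'a set set)"
    using inj_on_nabla_union by (simp add: eq cong: inj_on_cong)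
  ultimately show ?thesis ..
qed

end
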